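(* Let $a_1,\dots,a_n\in S^d$. Algorithm 2.6 (described in the context) terminates after finitely many steps, for feasible as well as infeasible instances. It terminates either in step 2 with a point $x^k/\|x^k\|\in S^d$ satisfying $a_i^Tx^k\ge0$ for all $i$, or in step 3 with a positively spanning subset of $\{a_1,\dots,a_n\}$. In this sense it solves the spherical feasibility problem: find $x\in S^d$ with $a_i^Tx\ge0$ for all $i$, or show none exists.
   Context: $S^d$ is the unit sphere in $\mathbb{R}^{d+1}$ and $O$ is the origin. For $x\in S^d$, an index $m$ is a most violated constraint if $a_m^Tx=\min_j a_j^Tx$. A finite set $Q$ is positively spanning if it is affinely independent and $O\in\mathrm{conv}\,Q$. The touching sphere of an affinely independent $Q$ is the unique sphere $\{z:\|z-C\|=R\}$ with $C\in\mathrm{aff}\,Q$ containing $Q$. Algorithm 2.6: (1) Choose any $j$ and set $k=1$, $x^1=a_j$, $Q_1=\{a_j\}$. (2) If $x^k/\|x^k\|$ is feasible, stop. Otherwise let $m$ be the index of a most violated constraint for $x^k/\|x^k\|$, and set $y=x^k$. (3) If $Q_k\cup\{a_m\}$ is positively spanning, stop. (4) Compute the center $C$ of the touching sphere of $Q_k\cup\{a_m\}$. (5) If $C\in\mathrm{conv}(Q_k\cup\{a_m\})$, set $x^{k+1}=C$, $Q_{k+1}=Q_k\cup\{a_m\}$ and $k:=k+1$, then go to (2). (6) Otherwise, let $y$ be the point where the segment $\overline{yC}$ meets the relative boundary of $\mathrm{conv}(Q_k\cup\{a_m\})$. Let $F$ be a facet of $\mathrm{conv}(Q_k\cup\{a_m\})$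 containing $y$, and let $a_j$ be the vertex of $Q_k$ not contained in $F$. Set $Q_k:=Q_k\setminus\{a_j\}$ and go to (4). *)

theory Defs
  imports "HOL-Analysis.Analysis"
begin

text \<open>Constraint vectors are a 0, ..., a (n-1) (the paper's a_1, ..., a_n), points of S^d
  inside a Euclidean space of type 'a (= R^(d+1)).\<close>

definition feasible :: "(nat \<Rightarrow> 'a::euclidean_space) \<Rightarrow> nat \<Rightarrow> 'a \<Rightarrow> bool" where
  "feasible a n x \<longleftrightarrow> (\<forall>i<n. a i \<bullet> x \<ge> 0)"

definition most_violated :: "(nat \<Rightarrow> 'a::euclidean_space) \<Rightarrow> nat \<Rightarrow> 'a \<Rightarrow> nat \<Rightarrow> bool" where
  "most_violated a n x m \<longleftrightarrow> m < n \<and> (\<forall>j<n. a m \<bullet> x \<le> a j \<bullet> x)"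

definition positively_spanning :: "'a::euclidean_space set \<Rightarrow> bool" where
  "positively_spanning Q \<longleftrightarrow> finite Q \<and> \<not> affine_dependent Q \<and> 0 \<in> convex hull Q"

definition touching_center :: "'a::euclidean_space set \<Rightarrow> 'a" where
  "touching_center Q = (THE C. C \<in> affine hull Q \<and> (\<exists>R. \<forall>q\<in>Q. dist q C = R))"

text \<open>States of Algorithm 2.6:
  Main x Q        -- at step (2) with current point x^k and set Q_k;
  Inner Q am y    -- at step (4) with current (possibly reduced) Q_k, the added vector a_m, and y;
  StopFeasible p  -- stopped in step (2) returning p = x^k/||x^k||;
  StopSpanning P  -- stopped in step (3) returning P = Q_k \<union> {a_m}.\<close>
datatype 'v alg_state =
    Main 'v "'v set"
  | Inner "'v set" 'v 'v
  | StopFeasible 'v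
  | StopSpanning "'v set"

inductive alg_step :: "(nat \<Rightarrow> 'a::euclidean_space) \<Rightarrow> nat \<Rightarrow> 'a alg_state \<Rightarrow> 'a alg_state \<Rightarrow> bool"
  for a :: "nat \<Rightarrow> 'a" and n :: nat where
  stop_feasible:
    "feasible a n (x /\<^sub>R norm x) \<Longrightarrow>
     alg_step a n (Main x Q) (StopFeasible (x /\<^sub>R norm x))"
| stop_spanning:
    "\<not> feasible a n (x /\<^sub>R norm x) \<Longrightarrow> most_violated a n (x /\<^sub>R norm x) m \<Longrightarrow>
     positively_spanning (insert (a m) Q) \<Longrightarrow>
     alg_step a n (Main x Q) (StopSpanning (insert (a m) Q))"
| to_inner:
    "\<not> feasible a n (x /\<^sub>R norm x) \<Longrightarrow> most_violated a n (x /\<^sub>R norm x) m \<Longrightarrow>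
     \<not> positively_spanning (insert (a m) Q) \<Longrightarrow>
     alg_step a n (Main x Q) (Inner Q (a m) x)"
| accept:
    "\<not> affine_dependent (insert am Q) \<Longrightarrow> C = touching_center (insert am Q) \<Longrightarrow>
     C \<in> convex hull (insert am Q) \<Longrightarrow>
     alg_step a n (Inner Q am y) (Main C (insert am Q))"
| drop:
    "\<not> affine_dependent (insert am Q) \<Longrightarrow> C = touching_center (insert am Q) \<Longrightarrow>
     C \<notin> convex hull (insert am Q) \<Longrightarrow>
     y' \<in> closed_segment y C \<Longrightarrow> y' \<in> rel_frontier (convex hull (insert am Q)) \<Longrightarrow>
     open_segment y' C \<inter> convex hull (insert am Q) = {} \<Longrightarrow>
     F facet_of convex hull (insert am Q) \<Longrightarrow> y' \<in> F \<Longrightarrow>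
     aj \<in> Q \<Longrightarrow> aj \<notin> F \<Longrightarrow>
     alg_step a n (Inner Q am y) (Inner (Q - {aj}) am y')"

definition alg_init :: "(nat \<Rightarrow> 'a) \<Rightarrow> nat \<Rightarrow> 'a alg_state \<Rightarrow> bool" where
  "alg_init a n s \<longleftrightarrow> (\<exists>j<n. s = Main (a j) {a j})"

end

theory Submission
  imports Defs
begin

text \<open>Since the a_i lie on the unit sphere, the touching centre of an affinely independent
  Q \<subseteq> {a_i} is the foot of the perpendicular from the origin to aff Q, its point of minimum norm.
  Every visit to step (2) happens at such a foot x^k with x^k \<in> conv Q_k and x^k \<noteq> 0. The inner
  loop (4)-(6) only moves y along segments towards centres of smaller norm, and the centre
  accepted in step (5) has norm strictly below |x^k| because a_m^T x^k < 0. Since these centres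
  range over the finitely many touching centres of subsets of {a_i}, and every pass through
  step (6) removes a vertex, the algorithm terminates.
  Step (6) can always be performed: at the exit point y some vertex v has barycentric coordinate
  0 while C has a negative one. If v were a_m, then y \<in> conv Q_k would force y = x^k, and
  C^T x^k = |C|^2 \<le> |x^k|^2 together with a_m^T x^k < 0 makes the a_m-coordinate of C nonnegative.\<close>

definition foot_of_origin :: "'a::real_inner set \<Rightarrow> 'a \<Rightarrow> bool" where
  "foot_of_origin Q x \<longleftrightarrow> x \<in> affine hull Q \<and> (\<forall>q\<in>Q. q \<bullet> x = x \<bullet> x)"

lemma inner_eq_on_affine_hull:
  fixes x :: "'a::real_inner"
  assumes "\<forall>q\<in>Q. q \<bullet> x = c" and "z \<in> affine hull Q"
  shows "z \<bullet> x = c"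
proof -
  have "Q \<subseteq> {z. x \<bullet> z = c}"
    using assms(1) by (auto simp: inner_commute)
  then have "affine hull Q \<subseteq> {z. x \<bullet> z = c}"
    by (intro hull_minimal affine_hyperplane)
  then show ?thesis
    using assms(2) by (auto simp: inner_commute)
qed

lemma foot_of_origin_inner:
  "foot_of_origin Q x \<Longrightarrow> z \<in> affine hull Q \<Longrightarrow> z \<bullet> x = x \<bullet> x"
  unfolding foot_of_origin_def using inner_eq_on_affine_hull by blast

lemma foot_of_origin_pythagoras:
  assumes "foot_of_origin Q x" and "z \<in> affine hull Q"
  shows "(norm z)\<^sup>2 = (norm x)\<^sup>2 + (norm (z - x))\<^sup>2"
  using foot_of_origin_inner[OF assms]
  by (simp add: power2_norm_eq_inner inner_diff_left inner_diff_right inner_commute)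

lemma foot_of_origin_norm_le:
  assumes "foot_of_origin Q x" and "z \<in> affine hull Q"
  shows "norm x \<le> norm z"
  using foot_of_origin_pythagoras[OF assms] by (simp add: power2_le_imp_le)

lemma foot_of_origin_norm_less:
  assumes "foot_of_origin Q x" and "z \<in> affine hull Q" and "z \<noteq> x"
  shows "norm x < norm z"
  using foot_of_origin_pythagoras[OF assms(1,2)] assms(3) by (simp add: power2_less_imp_less)

lemma foot_of_origin_unique:
  assumes "foot_of_origin Q x" and "foot_of_origin Q y"
  shows "x = y"
proof -
  have "y \<bullet> x = x \<bullet> x" and "x \<bullet> y = y \<bullet> y"
    using assms foot_of_origin_inner by (auto simp: foot_of_origin_def)
  then have "(x - y) \<bullet> (x - y) = 0"
    by (simp add: inner_diff_left inner_diff_right inner_commute)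
  then show ?thesis
    by simp
qed

lemma foot_of_origin_closest_point:
  fixes Q :: "'a::euclidean_space set"
  assumes "Q \<noteq> {}"
  shows "foot_of_origin Q (closest_point (affine hull Q) 0)"
proof -
  let ?S = "affine hull Q" and ?c = "closest_point (affine hull Q) 0"
  have S: "convex ?S" "closed ?S" "?S \<noteq> {}"
    using assms by (simp_all add: affine_imp_convex closed_affine_hull)
  have c: "?c \<in> ?S"
    using closest_point_in_set[OF S(2,3)] .
  have orth: "z \<bullet> ?c = ?c \<bullet> ?c" if z: "z \<in> ?S" for z
  proof -
    \<comment> \<open>the obtuse-angle criterion at z and at its reflection 2c - z gives equality\<close>
    have "2 *\<^sub>R ?c + (-1) *\<^sub>R z \<in> ?S"
      by (rule mem_affine[OF affine_affine_hull c z]) simp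
    from closest_point_dot[OF S(1,2) this, where a=0] have "(0 - ?c) \<bullet> (?c - z) \<le> 0"
      by (simp add: scaleR_2 algebra_simps)
    moreover have "(0 - ?c) \<bullet> (z - ?c) \<le> 0"
      using closest_point_dot[OF S(1,2) z, where a=0] .
    ultimately show ?thesis
      by (simp add: inner_diff_right inner_commute)
  qed
  show ?thesis
    unfolding foot_of_origin_def by (intro conjI ballI c orth hull_inc)
qed

lemma foot_of_origin_touching_center:
  fixes Q :: "'a::euclidean_space set"
  assumes "Q \<noteq> {}" and unit: "\<forall>q\<in>Q. norm q = 1"
  shows "foot_of_origin Q (touching_center Q)"
proof -
  let ?x = "closest_point (affine hull Q) 0"
  have x: "foot_of_origin Q ?x"
    using foot_of_origin_closest_point[OF assms(1)] .
  have dist_sq: "(dist q C)\<^sup>2 = 1 - 2 * (q \<bullet> C) + C \<bullet> C" if "q \<in> Q" for q C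
  proof -
    have "q \<bullet> q = 1"
      using unit that by (simp add: norm_eq_1)
    then show ?thesis
      by (simp add: dist_norm power2_norm_eq_inner inner_diff_left inner_diff_right inner_commute)
  qed
  have "touching_center Q = ?x"
    unfolding touching_center_def
  proof (rule the_equality)
    obtain q0 where "q0 \<in> Q"
      using assms(1) by blast
    have "dist q ?x = dist q0 ?x" if "q \<in> Q" for q
    proof -
      have "(dist q ?x)\<^sup>2 = (dist q0 ?x)\<^sup>2"
        using x dist_sq \<open>q0 \<in> Q\<close> that by (simp add: foot_of_origin_def)
      then show ?thesis
        by (simp add: power2_eq_iff_nonneg)
    qed
    with x show "?x \<in> affine hull Q \<and> (\<exists>R. \<forall>q\<in>Q. dist q ?x = R)"
      unfolding foot_of_origin_def by blast
  next
    fix C assume C: "C \<in> affine hull Q \<and> (\<exists>R. \<forall>q\<in>Q. dist q C = R)"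
    then obtain R where "\<forall>q\<in>Q. dist q C = R"
      by blast
    then have "\<forall>q\<in>Q. q \<bullet> C = (1 + C \<bullet> C - R\<^sup>2) / 2"
      using dist_sq by fastforce
    moreover from this have "C \<bullet> C = (1 + C \<bullet> C - R\<^sup>2) / 2"
      using C inner_eq_on_affine_hull by blast
    ultimately have "foot_of_origin Q C"
      using C by (simp add: foot_of_origin_def)
    then show "C = ?x"
      using foot_of_origin_unique x by blast
  qed
  then show ?thesis
    using x by simp
qed

lemma foot_of_origin_not_in_affine_hull:
  assumes "foot_of_origin Q x" and "p \<bullet> x < 0"
  shows "p \<notin> affine hull Q"
proof
  assume "p \<in> affine hull Q"
  then have "p \<bullet> x = x \<bullet> x"
    by (rule foot_of_origin_inner[OF assms(1)])
  with assms(2) inner_ge_zero[of x] show False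
    by linarith
qed

lemma norm_decreases_towards_foot:
  assumes "foot_of_origin S C" and "y \<in> affine hull S" and "z \<in> closed_segment y C"
  shows "z = y \<or> norm z < norm y"
proof -
  obtain u where u: "0 \<le> u" "u \<le> 1" "z = (1 - u) *\<^sub>R y + u *\<^sub>R C"
    using assms(3) by (auto simp: in_segment)
  show ?thesis
  proof (cases "u = 0 \<or> C = y")
    case True
    then show ?thesis
      using u(3) by (auto simp: scaleR_left_distrib[symmetric])
  next
    case False
    then have "norm C < norm y"
      using foot_of_origin_norm_less[OF assms(1,2)] by auto
    then have "u * norm C < u * norm y"
      using False u(1) by simp
    have "norm z \<le> (1 - u) * norm y + u * norm C"
      using u norm_triangle_ineq[of "(1 - u) *\<^sub>R y" "u *\<^sub>R C"] by simp
    also have "\<dots> < norm y"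
      using \<open>u * norm C < u * norm y\<close> by (simp add: algebra_simps)
    finally show ?thesis ..
  qed
qed

lemma exit_point_of_segment:
  fixes K :: "'a::euclidean_space set"
  assumes "closed K" and "y \<in> K"
  obtains z where "z \<in> closed_segment y C" "z \<in> K" "open_segment z C \<inter> K = {}"
proof -
  have "closed (K \<inter> closed_segment y C)" "K \<inter> closed_segment y C \<noteq> {}"
    using assms by (auto simp: closed_Int)
  then obtain z where z: "z \<in> K \<inter> closed_segment y C"
    "open_segment C z \<inter> (K \<inter> closed_segment y C) = {}"
    by (rule segment_to_point_exists)
  have "open_segment z C \<subseteq> closed_segment y C"
    using z(1) by (simp add: subset_oc_segment)
  then have "open_segment z C \<inter> K = {}"
    using z(2) by (auto simp: open_segment_commute)
  with z(1) show thesis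
    using that by blast
qed

lemma convex_hull_Diff_if_zero_coefficient:
  fixes S :: "'a::real_vector set"
  assumes "finite S" and "\<forall>w\<in>S. 0 \<le> \<beta> w" "sum \<beta> S = 1" "(\<Sum>w\<in>S. \<beta> w *\<^sub>R w) = z"
    and "v \<in> S" "\<beta> v = 0"
  shows "z \<in> convex hull (S - {v})"
  unfolding convex_hull_finite[OF finite_Diff[OF assms(1)]]
  using assms by (auto simp: sum_diff1 intro!: exI[of _ \<beta>])

lemma exit_from_convex_hull_coefficient:
  fixes S :: "'a::real_vector set"
  assumes "finite S" and \<beta>: "\<forall>v\<in>S. 0 \<le> \<beta> v" "sum \<beta> S = 1" "(\<Sum>v\<in>S. \<beta> v *\<^sub>R v) = z"
    and \<gamma>: "sum \<gamma> S = 1" "(\<Sum>v\<in>S. \<gamma> v *\<^sub>R v) = C"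
    and "z \<noteq> C" and exit: "open_segment z C \<inter> convex hull S = {}"
  obtains v where "v \<in> S" "\<beta> v = 0" "\<gamma> v < 0"
proof (rule ccontr)
  assume "\<not> thesis"
  then have pos: "\<forall>v\<in>S. 0 < \<beta> v \<or> 0 \<le> \<gamma> v"
    using that \<beta>(1) by force
  let ?\<delta> = "\<lambda>e v. (1 - e) * \<beta> v + e * \<gamma> v"
  have "\<forall>v\<in>S. eventually (\<lambda>e. 0 \<le> ?\<delta> e v) (at_right 0)"
  proof
    fix v assume "v \<in> S"
    show "eventually (\<lambda>e. 0 \<le> ?\<delta> e v) (at_right 0)"
    proof (cases "0 < \<beta> v")
      case True
      have "((\<lambda>e. ?\<delta> e v) \<longlongrightarrow> ?\<delta> 0 v) (at_right 0)"
        by (intro tendsto_intros)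
      then have "eventually (\<lambda>e. 0 < ?\<delta> e v) (at_right 0)"
        using True by (intro order_tendstoD(1)) auto
      then show ?thesis
        by (rule eventually_mono) simp
    next
      case False
      then have "\<beta> v = 0" "0 \<le> \<gamma> v"
        using \<beta>(1) pos \<open>v \<in> S\<close> by force+
      then show ?thesis
        using eventually_at_right_less[of 0] by (auto elim: eventually_mono)
    qed
  qed
  then have "eventually (\<lambda>e. (\<forall>v\<in>S. 0 \<le> ?\<delta> e v) \<and> e \<in> {0<..<1}) (at_right 0)"
    by (intro eventually_conj eventually_ball_finite[OF \<open>finite S\<close>] eventually_at_right_real) simp_all
  then obtain e where e: "\<forall>v\<in>S. 0 \<le> ?\<delta> e v" "0 < e" "e < 1"
    using eventually_happens'[of "at_right (0::real)"] by force
  have "(1 - e) *\<^sub>R z + e *\<^sub>R C \<in> convex hull S"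
    unfolding convex_hull_finite[OF \<open>finite S\<close>]
  proof (intro CollectI exI conjI)
    show "sum (?\<delta> e) S = 1"
      using \<beta>(2) \<gamma>(1) by (simp add: sum.distrib sum_distrib_left[symmetric])
    show "(\<Sum>v\<in>S. ?\<delta> e v *\<^sub>R v) = (1 - e) *\<^sub>R z + e *\<^sub>R C"
      unfolding \<beta>(3)[symmetric] \<gamma>(2)[symmetric]
      by (simp add: scaleR_add_left sum.distrib scaleR_sum_right)
  qed (use e(1) in blast)
  moreover have "(1 - e) *\<^sub>R z + e *\<^sub>R C \<in> open_segment z C"
    using e(2,3) \<open>z \<noteq> C\<close> by (auto simp: in_segment)
  ultimately show False
    using exit by blast
qed

lemma foot_of_origin_insert_coefficient_nonneg:
  fixes Q :: "'a::real_inner set"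
  assumes "finite Q" "p \<notin> Q" and x: "foot_of_origin Q x" and C: "foot_of_origin (insert p Q) C"
    and "p \<bullet> x < x \<bullet> x"
    and \<gamma>: "sum \<gamma> (insert p Q) = 1" "(\<Sum>v\<in>insert p Q. \<gamma> v *\<^sub>R v) = C"
  shows "0 \<le> \<gamma> p"
proof -
  have "C \<bullet> x = (\<Sum>v\<in>insert p Q. \<gamma> v * (v \<bullet> x))"
    unfolding \<gamma>(2)[symmetric] by (simp add: inner_sum_left)
  also have "\<dots> = \<gamma> p * (p \<bullet> x) + sum \<gamma> Q * (x \<bullet> x)"
    using x assms(1,2) by (simp add: foot_of_origin_def sum_distrib_right)
  also have "sum \<gamma> Q = 1 - \<gamma> p"
    using \<gamma>(1) assms(1,2) by simp
  finally have "C \<bullet> x = \<gamma> p * (p \<bullet> x) + (1 - \<gamma> p) * (x \<bullet> x)" .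
  moreover have "x \<in> affine hull (insert p Q)"
    using x hull_mono[of Q "insert p Q"] by (auto simp: foot_of_origin_def)
  then have "C \<bullet> x = C \<bullet> C" and "norm C \<le> norm x"
    using foot_of_origin_inner[OF C] foot_of_origin_norm_le[OF C] by (metis inner_commute)+
  then have "C \<bullet> x \<le> x \<bullet> x"
    by (simp add: power2_norm_eq_inner[symmetric] power_mono)
  ultimately have "\<gamma> p * (p \<bullet> x - x \<bullet> x) \<le> 0"
    by (simp add: algebra_simps)
  with \<open>p \<bullet> x < x \<bullet> x\<close> show ?thesis
    by (simp add: mult_le_0_iff)
qed

lemma exit_point_in_facet:
  fixes Q Q0 :: "'a::euclidean_space set"
  assumes x0: "foot_of_origin Q0 x0" and "Q \<subseteq> Q0" "finite Q" and "p \<bullet> x0 < 0"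
    and C: "foot_of_origin (insert p Q) C"
    and z: "z \<in> convex hull (insert p Q)" "z \<noteq> C"
      "open_segment z C \<inter> convex hull (insert p Q) = {}"
    and z_x0: "z = x0 \<or> norm z < norm x0"
  obtains q where "q \<in> Q" "z \<in> convex hull (insert p Q - {q})"
proof -
  let ?S = "insert p Q"
  have "p \<notin> Q"
    using foot_of_origin_not_in_affine_hull[OF x0 \<open>p \<bullet> x0 < 0\<close>] \<open>Q \<subseteq> Q0\<close>
      hull_subset[of Q0 affine] by blast
  have fS: "finite ?S"
    using \<open>finite Q\<close> by simp
  obtain \<beta> where \<beta>: "\<forall>v\<in>?S. 0 \<le> \<beta> v" "sum \<beta> ?S = 1" "(\<Sum>v\<in>?S. \<beta> v *\<^sub>R v) = z"
    using z(1) unfolding convex_hull_finite[OF fS] by blast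
  obtain \<gamma> where \<gamma>: "sum \<gamma> ?S = 1" "(\<Sum>v\<in>?S. \<gamma> v *\<^sub>R v) = C"
    using C unfolding foot_of_origin_def affine_hull_finite[OF fS] by blast
  obtain v where v: "v \<in> ?S" "\<beta> v = 0" "\<gamma> v < 0"
    using exit_from_convex_hull_coefficient[OF fS \<beta> \<gamma> z(2,3)] by blast
  have z_v: "z \<in> convex hull (?S - {v})"
    using convex_hull_Diff_if_zero_coefficient[OF fS \<beta> v(1,2)] .
  have "v \<noteq> p"
  proof
    assume "v = p"
    then have "z \<in> convex hull Q"
      using z_v \<open>p \<notin> Q\<close> by simp
    then have z_Q: "z \<in> affine hull Q"
      using convex_hull_subset_affine_hull by blast
    then have "z \<in> affine hull Q0"
      using hull_mono[OF \<open>Q \<subseteq> Q0\<close>] by blast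
    then have "z = x0"
      using foot_of_origin_norm_le[OF x0, of z] z_x0 by linarith
    then have "foot_of_origin Q x0"
      using x0 z_Q \<open>Q \<subseteq> Q0\<close> unfolding foot_of_origin_def by blast
    moreover have "p \<bullet> x0 < x0 \<bullet> x0"
      using \<open>p \<bullet> x0 < 0\<close> inner_ge_zero[of x0] by linarith
    ultimately have "0 \<le> \<gamma> p"
      using foot_of_origin_insert_coefficient_nonneg[OF \<open>finite Q\<close> \<open>p \<notin> Q\<close> _ C _ \<gamma>] by blast
    with v(3) \<open>v = p\<close> show False
      by simp
  qed
  with v(1) z_v that show thesis
    by blast
qed

lemma most_violated_exists:
  assumes "0 < n"
  shows "most_violated a n x (arg_min_on (\<lambda>j. a j \<bullet> x) {..<n})"
proof -
  have "{..<n} \<noteq> {}"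
    using assms by auto
  then show ?thesis
    using arg_min_if_finite(1)[of "{..<n}"] arg_min_least[where f = "\<lambda>j. a j \<bullet> x"]
    by (auto simp: most_violated_def)
qed

definition touching_centers :: "(nat \<Rightarrow> 'a::euclidean_space) \<Rightarrow> nat \<Rightarrow> 'a set" where
  "touching_centers a n = touching_center ` Pow (a ` {..<n})"

definition centers_below :: "(nat \<Rightarrow> 'a::euclidean_space) \<Rightarrow> nat \<Rightarrow> 'a \<Rightarrow> nat" where
  "centers_below a n x = card {c \<in> touching_centers a n. norm c < norm x}"

lemma centers_below_strict_mono:
  assumes "c \<in> touching_centers a n" and "norm c < norm x"
  shows "centers_below a n c < centers_below a n x"
  unfolding centers_below_def
proof (rule psubset_card_mono)
  show "finite {c \<in> touching_centers a n. norm c < norm x}"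
    by (simp add: touching_centers_def)
  show "{c' \<in> touching_centers a n. norm c' < norm c} \<subset> {c \<in> touching_centers a n. norm c < norm x}"
    using assms by auto
qed

definition main_inv :: "(nat \<Rightarrow> 'a::euclidean_space) \<Rightarrow> nat \<Rightarrow> 'a \<Rightarrow> 'a set \<Rightarrow> bool" where
  "main_inv a n x Q \<longleftrightarrow> Q \<subseteq> a ` {..<n} \<and> \<not> affine_dependent Q \<and> foot_of_origin Q x
     \<and> x \<in> convex hull Q \<and> x \<noteq> 0"

text \<open>In the inner loop, x0 and Q0 are the point x^k and the set Q_k at which the loop was
  entered; Q is Q_k after the removals made so far.\<close>
definition inner_inv :: "(nat \<Rightarrow> 'a::euclidean_space) \<Rightarrow> nat \<Rightarrow> 'a \<Rightarrow> 'a set \<Rightarrow> 'a \<Rightarrow> 'a \<Rightarrow> bool" where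
  "inner_inv a n x0 Q p y \<longleftrightarrow> (\<exists>Q0. main_inv a n x0 Q0 \<and> Q \<subseteq> Q0 \<and> p \<in> a ` {..<n} \<and> p \<bullet> x0 < 0
     \<and> 0 \<notin> convex hull (insert p Q0) \<and> y \<in> convex hull (insert p Q) \<and> (y = x0 \<or> norm y < norm x0))"

definition state_inv :: "(nat \<Rightarrow> 'a::euclidean_space) \<Rightarrow> nat \<Rightarrow> 'a \<Rightarrow> 'a alg_state \<Rightarrow> bool" where
  "state_inv a n x0 s = (case s of
     Main x Q \<Rightarrow> x = x0 \<and> main_inv a n x Q
   | Inner Q p y \<Rightarrow> inner_inv a n x0 Q p y
   | StopFeasible p \<Rightarrow> norm p = 1 \<and> (\<forall>i<n. 0 \<le> a i \<bullet> p)
   | StopSpanning P \<Rightarrow> P \<subseteq> a ` {..<n} \<and> positively_spanning P)"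

text \<open>Lexicographic descent in (centers_below x0, phase): a visit to step (2) ranks above every
  inner-loop state of the same x0, as card Q \<le> n.\<close>
definition potential :: "(nat \<Rightarrow> 'a::euclidean_space) \<Rightarrow> nat \<Rightarrow> 'a \<Rightarrow> 'a alg_state \<Rightarrow> nat" where
  "potential a n x0 s = (case s of
     Main _ _ \<Rightarrow> (n + 2) * centers_below a n x0 + n + 1
   | Inner Q _ _ \<Rightarrow> (n + 2) * centers_below a n x0 + card Q
   | _ \<Rightarrow> 0)"

lemma main_inv_center_mem:
  assumes "\<forall>i<n. norm (a i) = 1" and "main_inv a n x Q"
  shows "x \<in> touching_centers a n"
proof -
  have "Q \<noteq> {}" "\<forall>q\<in>Q. norm q = 1"
    using assms by (auto simp: main_inv_def foot_of_origin_def)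
  then have "foot_of_origin Q (touching_center Q)"
    by (rule foot_of_origin_touching_center)
  then have "touching_center Q = x"
    using foot_of_origin_unique assms(2) by (auto simp: main_inv_def)
  then show ?thesis
    using assms(2) by (auto simp: touching_centers_def main_inv_def)
qed

lemma inner_inv_touching_center:
  assumes "\<forall>i<n. norm (a i) = 1" and "inner_inv a n x0 Q p y"
  shows "foot_of_origin (insert p Q) (touching_center (insert p Q))"
proof (rule foot_of_origin_touching_center)
  show "\<forall>q\<in>insert p Q. norm q = 1"
    using assms by (auto simp: inner_inv_def main_inv_def)
qed simp

lemma state_inv_init:
  assumes "\<forall>i<n. norm (a i) = 1" and "j < n"
  shows "state_inv a n (a j) (Main (a j) {a j})"
proof -
  have "a j \<noteq> 0"
    using assms by auto
  moreover have "foot_of_origin {a j} (a j)"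
    by (simp add: foot_of_origin_def hull_inc)
  ultimately show ?thesis
    using assms(2) by (auto simp: state_inv_def main_inv_def hull_inc)
qed

lemma main_step_inv:
  assumes "main_inv a n x Q" and "alg_step a n (Main x Q) t"
  shows "state_inv a n x t \<and> potential a n x t < potential a n x (Main x Q)"
  using assms(2)
proof cases
  case stop_feasible
  then show ?thesis
    using assms(1) by (simp add: state_inv_def potential_def feasible_def main_inv_def)
next
  case (stop_spanning m)
  then show ?thesis
    using assms(1) by (auto simp: state_inv_def potential_def main_inv_def most_violated_def)
next
  case (to_inner m)
  have Q: "Q \<subseteq> a ` {..<n}" "\<not> affine_dependent Q" "foot_of_origin Q x" "x \<in> convex hull Q"
    "x \<noteq> 0"
    using assms(1) by (auto simp: main_inv_def)
  obtain i where "i < n" "a i \<bullet> (x /\<^sub>R norm x) < 0"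
    using to_inner(2) by (auto simp: feasible_def not_le)
  then have "a m \<bullet> (x /\<^sub>R norm x) < 0"
    using to_inner(3) by (auto simp: most_violated_def)
  then have "a m \<bullet> x < 0"
    using Q(5) by (simp add: mult_less_0_iff)
  then have "\<not> affine_dependent (insert (a m) Q)"
    using affine_independent_insert[OF Q(2)] foot_of_origin_not_in_affine_hull[OF Q(3)] by blast
  then have "0 \<notin> convex hull (insert (a m) Q)"
    using to_inner(4) Q(1) by (auto simp: positively_spanning_def finite_subset)
  moreover have "x \<in> convex hull (insert (a m) Q)"
    using Q(4) hull_mono[of Q "insert (a m) Q"] by blast
  moreover have "card Q \<le> n"
    using Q(1) by (metis card_image_le card_lessThan card_mono finite_imageI finite_lessThan order_trans)
  moreover have "m < n"
    using to_inner(3) by (simp add: most_violated_def)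
  ultimately show ?thesis
    using assms(1) \<open>a m \<bullet> x < 0\<close>
    by (auto simp: to_inner(1) state_inv_def inner_inv_def potential_def)
qed

lemma accept_step_inv:
  assumes unit: "\<forall>i<n. norm (a i) = 1" and I: "inner_inv a n x0 Q p y"
    and "\<not> affine_dependent (insert p Q)" and C: "C = touching_center (insert p Q)"
    and "C \<in> convex hull (insert p Q)"
  shows "main_inv a n C (insert p Q) \<and> norm C < norm x0"
proof -
  obtain Q0 where Q0: "main_inv a n x0 Q0" "Q \<subseteq> Q0" "p \<in> a ` {..<n}" "p \<bullet> x0 < 0"
    "0 \<notin> convex hull (insert p Q0)" and y: "y \<in> convex hull (insert p Q)" "y = x0 \<or> norm y < norm x0"
    using I by (auto simp: inner_inv_def)
  have foot: "foot_of_origin (insert p Q) C"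
    using inner_inv_touching_center[OF unit I] C by simp
  have y_aff: "y \<in> affine hull (insert p Q)"
    using y(1) convex_hull_subset_affine_hull by blast
  have "C \<noteq> 0"
    using \<open>C \<in> convex hull (insert p Q)\<close> Q0(2,5) hull_mono[of "insert p Q" "insert p Q0"] by auto
  then have "main_inv a n C (insert p Q)"
    using Q0 foot assms(3,5) by (auto simp: main_inv_def)
  moreover have "norm C < norm x0"
  proof (cases "y = x0")
    case True
    have "p \<bullet> C = C \<bullet> C"
      using foot by (simp add: foot_of_origin_def)
    have "C \<noteq> x0"
    proof
      assume "C = x0"
      then have "p \<bullet> x0 = x0 \<bullet> x0"
        using \<open>p \<bullet> C = C \<bullet> C\<close> by simp
      with Q0(4) inner_ge_zero[of x0] show False
        by linarith
    qed
    then show ?thesis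
      using foot_of_origin_norm_less[OF foot y_aff] True by simp
  next
    case False
    then show ?thesis
      using y(2) foot_of_origin_norm_le[OF foot y_aff] by simp
  qed
  ultimately show ?thesis ..
qed

lemma drop_step_inv:
  assumes unit: "\<forall>i<n. norm (a i) = 1" and I: "inner_inv a n x0 Q p y"
    and "\<not> affine_dependent (insert p Q)" and C: "C = touching_center (insert p Q)"
    and "y' \<in> closed_segment y C" and "F face_of convex hull (insert p Q)" "y' \<in> F" "q \<notin> F"
  shows "inner_inv a n x0 (Q - {q}) p y'"
proof -
  obtain Q0 where Q0: "main_inv a n x0 Q0" "Q \<subseteq> Q0" "p \<in> a ` {..<n}" "p \<bullet> x0 < 0"
    "0 \<notin> convex hull (insert p Q0)" and y: "y \<in> convex hull (insert p Q)" "y = x0 \<or> norm y < norm x0"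
    using I by (auto simp: inner_inv_def)
  have "y \<in> affine hull (insert p Q)"
    using y(1) convex_hull_subset_affine_hull by blast
  then have "y' = y \<or> norm y' < norm y"
    using norm_decreases_towards_foot inner_inv_touching_center[OF unit I] C assms(5) by blast
  then have "y' = x0 \<or> norm y' < norm x0"
    using y(2) by auto
  obtain c where "c \<subseteq> insert p Q" "F = convex hull c"
    using assms(6) face_of_convex_hull_affine_independent[OF assms(3)] by blast
  moreover have "q \<notin> c"
    using \<open>q \<notin> F\<close> \<open>F = convex hull c\<close> hull_subset[of c convex] by blast
  ultimately have "y' \<in> convex hull (insert p (Q - {q}))"
    using \<open>y' \<in> F\<close> hull_mono[of c "insert p (Q - {q})"] by blast
  then show ?thesis
    using Q0 \<open>y' = x0 \<or> norm y' < norm x0\<close> unfolding inner_inv_def by blast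
qed

lemma state_inv_step:
  assumes unit: "\<forall>i<n. norm (a i) = 1" and "state_inv a n x0 s" and "alg_step a n s t"
  shows "\<exists>x1. state_inv a n x1 t \<and> potential a n x1 t < potential a n x0 s"
proof (cases s)
  case (Main x Q)
  then have "main_inv a n x0 Q" "s = Main x0 Q"
    using assms(2) by (auto simp: state_inv_def)
  then show ?thesis
    using main_step_inv assms(3) by blast
next
  case (Inner Q p y)
  then have I: "inner_inv a n x0 Q p y"
    using assms(2) by (simp add: state_inv_def)
  from assms(3)[unfolded Inner] show ?thesis
  proof cases
    case (accept C)
    then have "main_inv a n C (insert p Q)" "norm C < norm x0"
      using accept_step_inv[OF unit I] by auto
    moreover from this have "centers_below a n C < centers_below a n x0"
      using centers_below_strict_mono main_inv_center_mem[OF unit] by blast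
    ultimately have "state_inv a n C t \<and> potential a n C t < potential a n x0 s"
      using mult_le_mono2[of "Suc (centers_below a n C)" "centers_below a n x0" "n + 2"]
      by (auto simp: Inner accept state_inv_def potential_def)
    then show ?thesis ..
  next
    case (drop C y' F q)
    have "inner_inv a n x0 (Q - {q}) p y'"
      using drop_step_inv[OF unit I] drop facet_of_def by blast
    moreover have "card (Q - {q}) < card Q"
      using aff_independent_finite[OF drop(2)] drop(10) by (meson card_Diff1_less finite_insert)
    ultimately show ?thesis
      by (auto simp: Inner drop state_inv_def potential_def)
  qed
qed (use assms(3) in \<open>auto elim: alg_step.cases\<close>)

lemma main_has_step:
  assumes "0 < n"
  shows "\<exists>t. alg_step a n (Main x Q) t"
  using alg_step.intros(1-3)[of a n x] most_violated_exists[OF assms] by blast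

lemma inner_has_step:
  assumes unit: "\<forall>i<n. norm (a i) = 1" and I: "inner_inv a n x0 Q p y"
  shows "\<exists>t. alg_step a n (Inner Q p y) t"
proof -
  let ?S = "insert p Q"
  obtain Q0 where Q0: "main_inv a n x0 Q0" "Q \<subseteq> Q0" "p \<bullet> x0 < 0"
    and y: "y \<in> convex hull ?S" "y = x0 \<or> norm y < norm x0"
    using I by (auto simp: inner_inv_def)
  have x0: "foot_of_origin Q0 x0" "\<not> affine_dependent Q0"
    using Q0(1) by (auto simp: main_inv_def)
  then have "\<not> affine_dependent (insert p Q0)"
    using affine_independent_insert foot_of_origin_not_in_affine_hull[OF x0(1) Q0(3)] by blast
  then have indep: "\<not> affine_dependent ?S"
    using affine_independent_subset Q0(2) by blast
  then have "finite ?S"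
    by (rule aff_independent_finite)
  define C where "C = touching_center ?S"
  have C: "foot_of_origin ?S C"
    using inner_inv_touching_center[OF unit I] by (simp add: C_def)
  show ?thesis
  proof (cases "C \<in> convex hull ?S")
    case True
    then show ?thesis
      using alg_step.accept[OF indep C_def] by blast
  next
    case False
    have "closed (convex hull ?S)"
      using \<open>finite ?S\<close> by (simp add: compact_imp_closed finite_imp_compact_convex_hull)
    then obtain z where z: "z \<in> closed_segment y C" "z \<in> convex hull ?S"
      "open_segment z C \<inter> convex hull ?S = {}"
      using exit_point_of_segment y(1) by blast
    have "z = y \<or> norm z < norm y"
      using norm_decreases_towards_foot[OF C _ z(1)] y(1) convex_hull_subset_affine_hull by blast
    then have "z = x0 \<or> norm z < norm x0"
      using y(2) by auto
    moreover have "z \<noteq> C"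
      using z(2) False by blast
    ultimately obtain q where q: "q \<in> Q" "z \<in> convex hull (?S - {q})"
      using exit_point_in_facet[OF x0(1) Q0(2) _ Q0(3) C z(2) _ z(3)] \<open>finite ?S\<close> by auto
    define F where "F = convex hull (?S - {q})"
    have facet: "F facet_of convex hull ?S"
      unfolding F_def facet_of_convex_hull_affine_independent[OF indep] using q by blast
    have "q \<notin> affine hull (?S - {q})"
      using indep q(1) by (auto simp: affine_dependent_def)
    then have "q \<notin> F"
      using convex_hull_subset_affine_hull unfolding F_def by blast
    then have "F \<noteq> convex hull ?S"
      using q(1) hull_inc[of q ?S] by blast
    then have "z \<in> rel_frontier (convex hull ?S)"
      using face_of_subset_rel_frontier facet q(2) by (auto simp: facet_of_def F_def)
    then show ?thesis
      using alg_step.drop[OF indep C_def False z(1) _ z(3) facet _ q(1) \<open>q \<notin> F\<close>] q(2) F_def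
      by blast
  qed
qed

lemma state_inv_stuck:
  assumes unit: "\<forall>i<n. norm (a i) = 1" and "0 < n" and "state_inv a n x0 t"
    and "\<not> (\<exists>u. alg_step a n t u)"
  shows "(\<exists>p. t = StopFeasible p \<and> norm p = 1 \<and> (\<forall>i<n. a i \<bullet> p \<ge> 0))
    \<or> (\<exists>P. t = StopSpanning P \<and> P \<subseteq> a ` {..<n} \<and> positively_spanning P)"
proof (cases t)
  case Main
  then show ?thesis
    using assms(4) main_has_step[OF assms(2)] by blast
next
  case (Inner Q p y)
  then have "inner_inv a n x0 Q p y"
    using assms(3) by (simp add: state_inv_def)
  then show ?thesis
    using inner_has_step[OF unit] assms(4) Inner by blast
qed (use assms(3) in \<open>simp_all add: state_inv_def\<close>)

lemma no_infinite_chain_if_potential_decreases: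
  assumes step: "\<And>x s t. I x s \<Longrightarrow> R s t \<Longrightarrow> \<exists>x'. I x' t \<and> \<mu> x' t < (\<mu> x s :: nat)"
    and "I x (f 0)"
  shows "\<not> (\<forall>k. R (f k) (f (Suc k)))"
proof
  assume chain: "\<forall>k. R (f k) (f (Suc k))"
  have "\<exists>x'. I x' (f k) \<and> \<mu> x' (f k) + k \<le> \<mu> x (f 0)" for k
  proof (induction k)
    case (Suc k)
    then obtain x' where x': "I x' (f k)" "\<mu> x' (f k) + k \<le> \<mu> x (f 0)"
      by blast
    then obtain x'' where "I x'' (f (Suc k))" "\<mu> x'' (f (Suc k)) < \<mu> x' (f k)"
      using step chain by blast
    with x'(2) show ?case
      by (intro exI[of _ x'']) auto
  qed (use assms(2) in auto)
  from this[of "Suc (\<mu> x (f 0))"] show False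
    by auto
qed

lemma state_inv_reachable:
  assumes unit: "\<forall>i<n. norm (a i) = 1" and "state_inv a n x s" and "(alg_step a n)\<^sup>*\<^sup>* s t"
  shows "\<exists>x'. state_inv a n x' t"
  using assms(3)
proof (induction rule: rtranclp_induct)
  case base
  then show ?case
    using assms(2) by blast
next
  case step
  then show ?case
    using state_inv_step[OF unit] by blast
qed

theorem lemma2p8:
  fixes a :: "nat \<Rightarrow> 'a::euclidean_space" and n :: nat
  assumes "\<forall>i<n. norm (a i) = 1"
  shows "\<not> (\<exists>f. alg_init a n (f 0) \<and> (\<forall>k. alg_step a n (f k) (f (Suc k))))
     \<and> (\<forall>s t. alg_init a n s \<longrightarrow> (alg_step a n)\<^sup>*\<^sup>* s t \<longrightarrow> \<not> (\<exists>u. alg_step a n t u) \<longrightarrow>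
           (\<exists>p. t = StopFeasible p \<and> norm p = 1 \<and> (\<forall>i<n. a i \<bullet> p \<ge> 0))
         \<or> (\<exists>P. t = StopSpanning P \<and> P \<subseteq> a ` {..<n} \<and> positively_spanning P))"
proof (intro conjI allI impI notI)
  fix f assume "\<exists>f. alg_init a n (f 0) \<and> (\<forall>k. alg_step a n (f k) (f (Suc k)))"
  then obtain f j where "j < n" "f 0 = Main (a j) {a j}" and run: "\<forall>k. alg_step a n (f k) (f (Suc k))"
    by (auto simp: alg_init_def)
  then have "state_inv a n (a j) (f 0)"
    using state_inv_init[OF assms] by simp
  then show False
    using no_infinite_chain_if_potential_decreases[where I = "state_inv a n" and \<mu> = "potential a n"]
      state_inv_step[OF assms] run by blast
next
  fix s t assume "alg_init a n s" and "(alg_step a n)\<^sup>*\<^sup>* s t" and stuck: "\<not> (\<exists>u. alg_step a n t u)"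
  then obtain j where "j < n" "s = Main (a j) {a j}"
    by (auto simp: alg_init_def)
  then have "state_inv a n (a j) s"
    using state_inv_init[OF assms] by simp
  then obtain x where "state_inv a n x t"
    using state_inv_reachable[OF assms _ \<open>(alg_step a n)\<^sup>*\<^sup>* s t\<close>] by blast
  moreover have "0 < n"
    using \<open>j < n\<close> by simp
  ultimately show "(\<exists>p. t = StopFeasible p \<and> norm p = 1 \<and> (\<forall>i<n. a i \<bullet> p \<ge> 0))
         \<or> (\<exists>P. t = StopSpanning P \<and> P \<subseteq> a ` {..<n} \<and> positively_spanning P)"
    using state_inv_stuck[OF assms _ _ stuck] by blast
qed

end
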